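(* Let ${\bm L},{\bm L}_1,\dots,{\bm L}_n\in\mathbb{S}^d_{++}$ satisfy $\frac1n\sum_{i=1}^n\lambda_{\max}({\bm L}^{-1})\lambda_{\max}({\bm L}_i)\lambda_{\max}({\bm L}_i{\bm L}^{-1})=1$, let $p\in(0,1]$, $\alpha=\frac{1-p}{np}$, $\beta=\frac1n\sum_i\lambda_{\max}({\bm L}_i)\lambda_{\max}({\bm L}^{-1}{\bm L}_i)$, $\omega=\lambda_{\max}(\mathbb{E}[{\bm S}^2])-1$, and $${\bm D}^*_{{\bm L}^{-1}}=\frac{2}{1+\sqrt{1+4\alpha\beta\,\lambda_{\max}(\mathbb{E}[{\bm S}{\bm L}^{-1}{\bm S}]-{\bm L}^{-1})}}\;{\bm L}^{-1}.$$ Then $\beta\,\lambda_{\max}(\mathbb{E}[{\bm S}{\bm L}^{-1}{\bm S}]-{\bm L}^{-1})\le\omega$, and $$\frac{1}{\det({\bm D}^*_{{\bm L}^{-1}})^{1/d}}\le\lambda_{\max}({\bm L})\left(1+\sqrt{\frac{(1-p)\,\omega}{pn}}\right).$$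
   Context: $\mathbb{S}^d_{++}$: symmetric positive definite matrices; $\lambda_{\max}$: largest eigenvalue. ${\bm S}$ is a random symmetric positive semidefinite $d\times d$ matrix with $\mathbb{E}[{\bm S}]={\bm I}_d$ and finite second moments. *)

theory Defs
  imports "HOL-Analysis.Analysis" "HOL-Probability.Probability"
begin

definition real_eigenvalues :: "real^'d^'d \<Rightarrow> real set" where
  "real_eigenvalues A = {c. \<exists>v. v \<noteq> 0 \<and> A *v v = c *\<^sub>R v}"

text \<open>Largest eigenvalue (used for matrices all of whose eigenvalues are real).\<close>
definition lambda_max :: "real^'d^'d \<Rightarrow> real" where
  "lambda_max A = Max (real_eigenvalues A)"

definition sym_pos_def :: "real^'d^'d \<Rightarrow> bool" where
  "sym_pos_def A \<longleftrightarrow> transpose A = A \<and> (\<forall>x. x \<noteq> 0 \<longrightarrow> x \<bullet> (A *v x) > 0)"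

definition sym_psd :: "real^'d^'d \<Rightarrow> bool" where
  "sym_psd A \<longleftrightarrow> transpose A = A \<and> (\<forall>x. x \<bullet> (A *v x) \<ge> 0)"

end

theory Submission
  imports Defs
begin

text \<open>
  Put A = L^-1, mu = lambda_max A and z = S x - x. Since E[S] = I, the expectations of
  z . A z and z . z are the quadratic forms of E[S A S] - A and E[S S] - I at x, while pointwise
  0 <= z . A z <= mu (z . z); hence 0 <= lambda_max (E[S A S] - A) <= mu omega. The normalisation
  hypothesis says mu beta = 1 because L_i A and A L_i are similar, which gives the first claim.
  For the second, det D^(1/d) = k / det L^(1/d) for the step size k, det L^(1/d) <= lambda_max L
  because det L is the product of the eigenvalues of L, and
  1/k = (1 + sqrt (1 + 4 alpha beta lam)) / 2 <= 1 + sqrt (alpha omega) by the first claim.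
\<close>

section \<open>Symmetric matrices and their largest eigenvalue\<close>

lemma inner_matrix_vector_symmetric:
  fixes M :: "real^'n^'n"
  assumes "transpose M = M"
  shows "x \<bullet> (M *v y) = y \<bullet> (M *v x)"
proof -
  have "x \<bullet> (M *v y) = (x v* M) \<bullet> y" by (simp add: dot_lmul_matrix)
  also have "x v* M = M *v x" by (metis assms transpose_matrix_vector)
  finally show ?thesis by (simp add: inner_commute)
qed

lemma linear_coefficient_zero_if_quadratic_nonpos:
  fixes a b :: real
  assumes "\<And>t. 2 * t * a + t\<^sup>2 * b \<le> 0"
  shows "a = 0"
proof (rule ccontr)
  assume "a \<noteq> 0"
  define t where "t = a / (\<bar>b\<bar> + 1)"
  have "t \<noteq> 0" using \<open>a \<noteq> 0\<close> by (simp add: t_def add_nonneg_eq_0_iff)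
  have "a = t * (\<bar>b\<bar> + 1)" unfolding t_def by (simp add: add_nonneg_eq_0_iff)
  then have "2 * t * a + t\<^sup>2 * b = t\<^sup>2 * (2 * \<bar>b\<bar> + 2 + b)" by (simp add: power2_eq_square algebra_simps)
  also have "\<dots> > 0" using \<open>t \<noteq> 0\<close> by (intro mult_pos_pos) auto
  finally show False using assms[of t] by simp
qed

lemma quadratic_form_maximiser_orthogonal:
  fixes M :: "real^'n^'n"
  assumes sym: "transpose M = M" and W: "subspace W" and "v \<in> W" "w \<in> W"
    and le: "\<And>x. x \<in> W \<Longrightarrow> x \<bullet> (M *v x) \<le> c * (x \<bullet> x)"
    and eq: "v \<bullet> (M *v v) = c * (v \<bullet> v)"
  shows "w \<bullet> (M *v v - c *\<^sub>R v) = 0"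
proof (rule linear_coefficient_zero_if_quadratic_nonpos)
  fix t :: real
  have "v + t *\<^sub>R w \<in> W" using W assms(3,4) by (simp add: subspace_add subspace_scale)
  then have "(v + t *\<^sub>R w) \<bullet> (M *v (v + t *\<^sub>R w)) \<le> c * ((v + t *\<^sub>R w) \<bullet> (v + t *\<^sub>R w))"
    by (rule le)
  moreover have "v \<bullet> (M *v w) = w \<bullet> (M *v v)" by (rule inner_matrix_vector_symmetric[OF sym])
  ultimately show "2 * t * (w \<bullet> (M *v v - c *\<^sub>R v)) + t\<^sup>2 * (w \<bullet> (M *v w) - c * (w \<bullet> w)) \<le> 0"
    using eq by (simp add: power2_eq_square matrix_vector_right_distrib matrix_vector_mult_scaleR
        inner_add_left inner_add_right inner_diff_right inner_commute[of v w] algebra_simps)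
qed

lemma symmetric_top_eigenvector_in_invariant_subspace:
  fixes M :: "real^'n^'n"
  assumes sym: "transpose M = M" and W: "subspace W" and "x0 \<in> W" "x0 \<noteq> 0"
    and inv: "\<And>x. x \<in> W \<Longrightarrow> M *v x \<in> W"
  obtains v c where "v \<in> W" "norm v = 1" "M *v v = c *\<^sub>R v"
    "\<And>x. x \<in> W \<Longrightarrow> x \<bullet> (M *v x) \<le> c * (x \<bullet> x)"
proof -
  let ?K = "W \<inter> sphere 0 1"
  have "compact ?K"
    using compact_Int_closed[OF compact_sphere closed_subspace[OF W]] by (simp add: Int_commute)
  moreover have "x0 /\<^sub>R norm x0 \<in> ?K" using assms(3,4) W by (simp add: subspace_scale)
  moreover have "continuous_on ?K (\<lambda>x. x \<bullet> (M *v x))"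
    by (intro continuous_on_inner continuous_on_id
        linear_continuous_on[OF matrix_vector_mul_bounded_linear])
  ultimately obtain v where v: "v \<in> ?K" and max: "\<And>y. y \<in> ?K \<Longrightarrow> y \<bullet> (M *v y) \<le> v \<bullet> (M *v v)"
    using continuous_attains_sup[of ?K "\<lambda>x. x \<bullet> (M *v x)"] by blast
  define c where "c = v \<bullet> (M *v v)"
  have vW: "v \<in> W" and vv: "v \<bullet> v = 1" using v by (auto simp: norm_eq_1)
  have ray: "x \<bullet> (M *v x) \<le> c * (x \<bullet> x)" if "x \<in> W" for x
  proof (cases "x = 0")
    case False
    have "x /\<^sub>R norm x \<in> ?K" using that False W by (simp add: subspace_scale)
    then have "(x /\<^sub>R norm x) \<bullet> (M *v (x /\<^sub>R norm x)) \<le> c" unfolding c_def by (rule max)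
    then have "(x \<bullet> (M *v x)) / (norm x)\<^sup>2 \<le> c"
      by (simp add: matrix_vector_mult_scaleR power2_eq_square divide_inverse mult_ac)
    then show ?thesis using False by (simp add: pos_divide_le_eq power2_norm_eq_inner mult.commute)
  qed simp
  have "M *v v - c *\<^sub>R v \<in> W" using W vW inv[OF vW] by (simp add: subspace_diff subspace_scale)
  moreover have "v \<bullet> (M *v v) = c * (v \<bullet> v)" by (simp add: c_def vv)
  ultimately have "(M *v v - c *\<^sub>R v) \<bullet> (M *v v - c *\<^sub>R v) = 0"
    using quadratic_form_maximiser_orthogonal[OF sym W vW _ ray] by blast
  then have "M *v v = c *\<^sub>R v" by simp
  with that vW v ray show thesis by auto
qed

lemma finite_real_eigenvalues:
  fixes M :: "real^'n^'n"
  assumes sym: "transpose M = M"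
  shows "finite (real_eigenvalues M)"
proof -
  define E where "E = real_eigenvalues M"
  have "\<forall>c\<in>E. \<exists>v. v \<noteq> 0 \<and> M *v v = c *\<^sub>R v" unfolding E_def real_eigenvalues_def by blast
  then obtain f where "\<forall>c\<in>E. f c \<noteq> 0 \<and> M *v f c = c *\<^sub>R f c" by (rule bchoice[THEN exE])
  then have f: "f c \<noteq> 0" "M *v f c = c *\<^sub>R f c" if "c \<in> E" for c using that by auto
  have orth: "f c \<bullet> f d = 0" if "c \<in> E" "d \<in> E" "c \<noteq> d" for c d
  proof -
    have "c * (f c \<bullet> f d) = (M *v f c) \<bullet> f d" using f(2)[OF that(1)] by simp
    also have "\<dots> = f c \<bullet> (M *v f d)" by (metis inner_commute sym inner_matrix_vector_symmetric)
    also have "\<dots> = d * (f c \<bullet> f d)" using f(2)[OF that(2)] by simp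
    finally have "(c - d) * (f c \<bullet> f d) = 0" by (simp add: algebra_simps)
    then show ?thesis using that(3) by simp
  qed
  have "inj_on f E"
  proof (rule inj_onI, rule ccontr)
    fix c d assume "c \<in> E" "d \<in> E" "f c = f d" "c \<noteq> d"
    then have "f c \<bullet> f c = 0" using orth[of c d] by simp
    then show False using f(1)[OF \<open>c \<in> E\<close>] by simp
  qed
  moreover have "pairwise orthogonal (f ` E)"
    unfolding pairwise_def orthogonal_def using orth by fastforce
  then have "finite (f ` E)" by (rule pairwise_orthogonal_imp_finite)
  ultimately show ?thesis unfolding E_def by (meson finite_imageD)
qed

lemma symmetric_lambda_max:
  fixes M :: "real^'n^'n"
  assumes sym: "transpose M = M"
  shows lambda_max_real_eigenvalue: "lambda_max M \<in> real_eigenvalues M"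
    and quadratic_form_le_lambda_max: "x \<bullet> (M *v x) \<le> lambda_max M * (x \<bullet> x)"
    and real_eigenvalue_le_lambda_max: "c \<in> real_eigenvalues M \<Longrightarrow> c \<le> lambda_max M"
proof -
  have nonzero: "axis undefined (1::real) \<noteq> (0::real^'n)" by (simp add: axis_eq_0_iff)
  obtain v m where v: "norm v = 1" "M *v v = m *\<^sub>R v" and ray: "\<And>y. y \<bullet> (M *v y) \<le> m * (y \<bullet> y)"
    by (rule symmetric_top_eigenvector_in_invariant_subspace[OF sym subspace_UNIV UNIV_I nonzero]) blast+
  have eig: "m \<in> real_eigenvalues M"
    unfolding real_eigenvalues_def using v by (intro CollectI exI[of _ v]) auto
  have le: "e \<le> m" if "e \<in> real_eigenvalues M" for e
  proof -
    from that obtain u where u: "u \<noteq> 0" "M *v u = e *\<^sub>R u" unfolding real_eigenvalues_def by auto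
    have "e * (u \<bullet> u) \<le> m * (u \<bullet> u)" using ray[of u] u(2) by simp
    then show ?thesis using u(1) by (simp add: mult_le_cancel_right)
  qed
  have "lambda_max M = m" unfolding lambda_max_def
    by (rule Max_eqI[OF finite_real_eigenvalues[OF sym]]) (use le eig in auto)
  then show "lambda_max M \<in> real_eigenvalues M" "x \<bullet> (M *v x) \<le> lambda_max M * (x \<bullet> x)"
    "c \<in> real_eigenvalues M \<Longrightarrow> c \<le> lambda_max M"
    using eig ray le by auto
qed

lemma symmetric_eigenvector_orthogonal_to:
  fixes M :: "real^'n^'n"
  assumes sym: "transpose M = M" and B: "finite B" "card B < CARD('n)"
    and eig: "\<And>u. u \<in> B \<Longrightarrow> \<exists>c. M *v u = c *\<^sub>R u"
  obtains v c where "norm v = 1" "M *v v = c *\<^sub>R v" "\<And>u. u \<in> B \<Longrightarrow> u \<bullet> v = 0"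
proof -
  define W where "W = {y. \<forall>u\<in>B. orthogonal u y}"
  have W: "subspace W" unfolding W_def by (rule subspace_orthogonal_to_vectors)
  have "dim B < dim (UNIV :: (real^'n) set)" using dim_le_card'[OF B(1)] B(2) by simp
  then have "span B \<noteq> UNIV" by (metis dim_span less_irrefl)
  then obtain a where a: "a \<noteq> 0" "\<And>x. x \<in> span B \<Longrightarrow> a \<bullet> x = 0"
    using span_not_UNIV_orthogonal by blast
  have aW: "a \<in> W" unfolding W_def orthogonal_def using a(2) span_base by (fastforce simp: inner_commute)
  have inv: "M *v y \<in> W" if "y \<in> W" for y
    unfolding W_def orthogonal_def
  proof (intro CollectI ballI)
    fix u assume "u \<in> B"
    then obtain c where "M *v u = c *\<^sub>R u" using eig by blast
    then have "u \<bullet> (M *v y) = c * (y \<bullet> u)" by (simp add: inner_matrix_vector_symmetric[OF sym, of u y])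
    then show "u \<bullet> (M *v y) = 0" using that \<open>u \<in> B\<close> unfolding W_def orthogonal_def by (simp add: inner_commute)
  qed
  obtain v c where "v \<in> W" "norm v = 1" "M *v v = c *\<^sub>R v"
    by (rule symmetric_top_eigenvector_in_invariant_subspace[OF sym W aW a(1) inv])
  then show thesis using that unfolding W_def orthogonal_def by blast
qed

lemma symmetric_orthonormal_eigenvectors:
  fixes M :: "real^'n^'n"
  assumes sym: "transpose M = M"
  shows "k \<le> CARD('n) \<Longrightarrow> \<exists>B. finite B \<and> card B = k \<and> (\<forall>u\<in>B. norm u = 1 \<and> (\<exists>c. M *v u = c *\<^sub>R u))
     \<and> (\<forall>u\<in>B. \<forall>w\<in>B. u \<noteq> w \<longrightarrow> u \<bullet> w = 0)"
proof (induction k)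
  case (Suc k)
  then obtain B where B: "finite B" "card B = k" "\<forall>u\<in>B. norm u = 1 \<and> (\<exists>c. M *v u = c *\<^sub>R u)"
    "\<forall>u\<in>B. \<forall>w\<in>B. u \<noteq> w \<longrightarrow> u \<bullet> w = 0" by auto
  obtain v c where v: "norm v = 1" "M *v v = c *\<^sub>R v" "\<And>u. u \<in> B \<Longrightarrow> u \<bullet> v = 0"
    using symmetric_eigenvector_orthogonal_to[OF sym B(1)] B(2,3) Suc.prems by (metis Suc_le_lessD)
  have "v \<notin> B" using v(1,3) by (metis inner_eq_zero_iff norm_zero zero_neq_one)
  then show ?case
    using B v by (intro exI[of _ "insert v B"]) (auto simp: inner_commute)
qed auto

lemma det_eq_prod_eigenvalues_of_orthonormal_basis:
  fixes M :: "real^'n^'n" and f :: "'n \<Rightarrow> real^'n"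
  assumes orthonormal: "\<And>i j. f i \<bullet> f j = (if i = j then 1 else 0)"
    and eig: "\<And>j. M *v f j = c j *\<^sub>R f j"
  shows "det M = (\<Prod>j\<in>UNIV. c j)"
proof -
  define Q :: "real^'n^'n" where "Q = (\<chi> i j. f j $ i)"
  define D :: "real^'n^'n" where "D = (\<chi> i j. if i = j then c j else 0)"
  have "transpose Q ** Q = mat 1"
    using orthonormal by (simp add: vec_eq_iff mat_def matrix_matrix_mult_def transpose_def Q_def inner_vec_def)
  then have "det Q * det Q = 1" by (metis det_mul det_transpose det_I)
  then have "det Q \<noteq> 0" by auto
  have "M ** Q = Q ** D"
    using eig by (simp add: vec_eq_iff matrix_matrix_mult_def matrix_vector_mult_def Q_def D_def
        if_distrib mult.commute cong: if_cong)
  then have "det M * det Q = det Q * det D" by (metis det_mul)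
  then have "det M = det D" using \<open>det Q \<noteq> 0\<close> by simp
  also have "det D = (\<Prod>j\<in>UNIV. c j)" by (subst det_diagonal) (auto simp: D_def)
  finally show ?thesis .
qed

lemma det_symmetric_eq_prod_eigenvalues:
  fixes M :: "real^'n^'n"
  assumes sym: "transpose M = M"
  obtains c :: "'n \<Rightarrow> real" where "det M = (\<Prod>j\<in>UNIV. c j)" "\<And>j. c j \<in> real_eigenvalues M"
proof -
  obtain B where B: "finite B" "card B = CARD('n)" "\<forall>u\<in>B. norm u = 1 \<and> (\<exists>c. M *v u = c *\<^sub>R u)"
    "\<forall>u\<in>B. \<forall>w\<in>B. u \<noteq> w \<longrightarrow> u \<bullet> w = 0"
    using symmetric_orthonormal_eigenvectors[OF sym order_refl] by blast
  obtain f where f: "bij_betw f (UNIV::'n set) B"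
    using finite_same_card_bij[of "UNIV::'n set" B] B(1,2) by auto
  then have fB: "f j \<in> B" for j by (simp add: bij_betw_apply)
  have "\<forall>j. \<exists>c. M *v f j = c *\<^sub>R f j" using B(3) fB by blast
  then obtain c where "\<forall>j. M *v f j = c j *\<^sub>R f j" by (rule choice[THEN exE])
  then have c: "M *v f j = c j *\<^sub>R f j" for j by blast
  have "f i \<bullet> f j = (if i = j then 1 else 0)" for i j
  proof (cases "i = j")
    case False
    then have "f i \<noteq> f j" using bij_betw_imp_inj_on[OF f] by (auto dest: injD)
    then show ?thesis using B(4) fB False by simp
  qed (use B(3) fB in \<open>simp add: norm_eq_1\<close>)
  then have "det M = (\<Prod>j\<in>UNIV. c j)" by (rule det_eq_prod_eigenvalues_of_orthonormal_basis) (rule c)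
  moreover have "c j \<in> real_eigenvalues M" for j
    unfolding real_eigenvalues_def using c[of j] B(3) fB[of j] by (intro CollectI exI[of _ "f j"]) auto
  ultimately show thesis using that[of c] by blast
qed

lemma lambda_max_nonneg_of_quadratic_form_nonneg:
  fixes K :: "real^'n^'n"
  assumes "transpose K = K" "\<And>x. 0 \<le> x \<bullet> (K *v x)"
  shows "0 \<le> lambda_max K"
proof -
  obtain v where v: "v \<noteq> 0" "K *v v = lambda_max K *\<^sub>R v"
    using lambda_max_real_eigenvalue[OF assms(1)] unfolding real_eigenvalues_def by blast
  then have "0 \<le> lambda_max K * (v \<bullet> v)" using assms(2)[of v] by simp
  moreover have "0 < v \<bullet> v" using v(1) by simp
  ultimately show ?thesis by (simp add: zero_le_mult_iff)
qed

lemma lambda_max_le_of_quadratic_form_le: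
  fixes K N :: "real^'n^'n"
  assumes symK: "transpose K = K" and symN: "transpose N = N" and "0 \<le> \<mu>"
    and upper: "\<And>x. x \<bullet> (K *v x) \<le> \<mu> * (x \<bullet> (N *v x) - x \<bullet> x)"
  shows "lambda_max K \<le> \<mu> * (lambda_max N - 1)"
proof -
  obtain v where v: "v \<noteq> 0" "K *v v = lambda_max K *\<^sub>R v"
    using lambda_max_real_eigenvalue[OF symK] unfolding real_eigenvalues_def by blast
  have "\<mu> * (v \<bullet> (N *v v) - v \<bullet> v) \<le> \<mu> * (lambda_max N * (v \<bullet> v) - v \<bullet> v)"
    using quadratic_form_le_lambda_max[OF symN, of v] \<open>0 \<le> \<mu>\<close> by (intro mult_left_mono) auto
  then have "lambda_max K * (v \<bullet> v) \<le> (\<mu> * (lambda_max N - 1)) * (v \<bullet> v)"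
    using upper[of v] v(2) by (simp add: algebra_simps)
  moreover have "0 < v \<bullet> v" using v(1) by simp
  ultimately show ?thesis by (simp only: mult_le_cancel_right_pos)
qed

section \<open>Positive definite matrices\<close>

lemma sym_pos_def_real_eigenvalue_pos:
  fixes L :: "real^'n^'n"
  assumes "sym_pos_def L" "c \<in> real_eigenvalues L"
  shows "c > 0"
proof -
  obtain v where v: "v \<noteq> 0" "L *v v = c *\<^sub>R v" using assms(2) unfolding real_eigenvalues_def by blast
  then have "c * (v \<bullet> v) > 0" using assms(1) unfolding sym_pos_def_def by force
  moreover have "v \<bullet> v > 0" using v(1) by simp
  ultimately show ?thesis by (simp add: zero_less_mult_iff)
qed

lemma sym_pos_def_lambda_max_pos:
  fixes L :: "real^'n^'n"
  assumes "sym_pos_def L"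
  shows "lambda_max L > 0"
  using assms by (meson sym_pos_def_def sym_pos_def_real_eigenvalue_pos lambda_max_real_eigenvalue)

lemma sym_pos_def_imp_sym_psd:
  fixes L :: "real^'n^'n"
  assumes "sym_pos_def L"
  shows "sym_psd L"
  using assms unfolding sym_pos_def_def sym_psd_def by (metis inner_zero_left less_eq_real_def)

lemma sym_pos_def_matrix_inv:
  fixes L :: "real^'n^'n"
  assumes pd: "sym_pos_def L"
  shows "L ** matrix_inv L = mat 1" "matrix_inv L ** L = mat 1" "sym_pos_def (matrix_inv L)"
proof -
  have sym: "transpose L = L" using pd unfolding sym_pos_def_def by blast
  have "inj ((*v) L)"
    unfolding vec.inj_iff_eq_0 using pd unfolding sym_pos_def_def by force
  then obtain B where "B ** L = mat 1" using matrix_left_invertible_injective by blast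
  then have "\<exists>B. L ** B = mat 1 \<and> B ** L = mat 1" using matrix_left_right_inverse by blast
  then have "L ** matrix_inv L = mat 1 \<and> matrix_inv L ** L = mat 1"
    unfolding matrix_inv_def by (rule someI_ex)
  then show LA: "L ** matrix_inv L = mat 1" and "matrix_inv L ** L = mat 1" by auto
  define A where "A = matrix_inv L"
  have "transpose A ** L = mat 1"
    using arg_cong[OF LA, of transpose] sym by (simp add: matrix_transpose_mul A_def)
  then have "transpose A = transpose A ** (L ** A)" using LA A_def by simp
  also have "\<dots> = A" using \<open>transpose A ** L = mat 1\<close> by (simp add: matrix_mul_assoc)
  finally have symA: "transpose A = A" .
  have "x \<bullet> (A *v x) > 0" if "x \<noteq> 0" for x
  proof -
    have Ly: "L *v (A *v x) = x" using LA by (simp add: matrix_vector_mul_assoc A_def)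
    then have "A *v x \<noteq> 0" using that by auto
    then have "(A *v x) \<bullet> (L *v (A *v x)) > 0" using pd unfolding sym_pos_def_def by blast
    then show ?thesis using Ly by (simp add: inner_commute)
  qed
  then show "sym_pos_def (matrix_inv L)" using symA unfolding sym_pos_def_def A_def by blast
qed

lemma real_eigenvalues_mult_subset:
  fixes X Y :: "real^'n^'n"
  assumes "Y' ** Y = mat 1"
  shows "real_eigenvalues (X ** Y) \<subseteq> real_eigenvalues (Y ** X)"
proof
  fix c assume "c \<in> real_eigenvalues (X ** Y)"
  then obtain v where v: "v \<noteq> 0" "(X ** Y) *v v = c *\<^sub>R v" unfolding real_eigenvalues_def by blast
  have "Y' *v (Y *v v) = v" using assms by (simp add: matrix_vector_mul_assoc)
  then have "Y *v v \<noteq> 0" using v(1) by auto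
  moreover have "(Y ** X) *v (Y *v v) = Y *v ((X ** Y) *v v)"
    by (simp add: matrix_vector_mul_assoc matrix_mul_assoc)
  then have "(Y ** X) *v (Y *v v) = c *\<^sub>R (Y *v v)" using v(2) by (simp add: matrix_vector_mult_scaleR)
  ultimately show "c \<in> real_eigenvalues (Y ** X)" unfolding real_eigenvalues_def by blast
qed

lemma lambda_max_mult_commute:
  fixes X Y :: "real^'n^'n"
  assumes "X' ** X = mat 1" "Y' ** Y = mat 1"
  shows "lambda_max (X ** Y) = lambda_max (Y ** X)"
  unfolding lambda_max_def
  using real_eigenvalues_mult_subset[OF assms(1), of Y] real_eigenvalues_mult_subset[OF assms(2), of X]
  by (simp add: subset_antisym)

lemma mean_lambda_max_products_eq_inverse:
  fixes L :: "real^'n^'n" and Ls :: "nat \<Rightarrow> real^'n^'n"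
  assumes "sym_pos_def L" "\<And>i. i < n \<Longrightarrow> sym_pos_def (Ls i)"
    and "(1 / real n) * (\<Sum>i<n. lambda_max (matrix_inv L) * lambda_max (Ls i)
            * lambda_max (Ls i ** matrix_inv L)) = 1"
  shows "(1 / real n) * (\<Sum>i<n. lambda_max (Ls i) * lambda_max (matrix_inv L ** Ls i))
    = 1 / lambda_max (matrix_inv L)"
proof -
  have "lambda_max (Ls i ** matrix_inv L) = lambda_max (matrix_inv L ** Ls i)" if "i < n" for i
    using lambda_max_mult_commute[OF sym_pos_def_matrix_inv(2)[OF assms(2)[OF that]]
        sym_pos_def_matrix_inv(1)[OF assms(1)]] .
  then have "lambda_max (matrix_inv L) * ((1 / real n) * (\<Sum>i<n. lambda_max (Ls i) * lambda_max (matrix_inv L ** Ls i))) = 1"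
    using assms(3) by (auto simp: sum_distrib_left mult_ac intro!: sum.cong)
  moreover have "0 < lambda_max (matrix_inv L)"
    by (rule sym_pos_def_lambda_max_pos[OF sym_pos_def_matrix_inv(3)[OF assms(1)]])
  ultimately show ?thesis by (metis eq_divide_eq mult.commute order_less_irrefl)
qed

lemma det_scaleR_matrix:
  fixes A :: "real^'n^'n"
  shows "det (k *\<^sub>R A) = k ^ CARD('n) * det A"
proof -
  have "k *\<^sub>R A = (k *\<^sub>R mat 1) ** A" by (metis matrix_mul_lid scalar_matrix_assoc)
  moreover have "det (k *\<^sub>R (mat 1 :: real^'n^'n)) = k ^ CARD('n)"
    by (subst det_diagonal) (auto simp: mat_def)
  ultimately show ?thesis by (simp add: det_mul)
qed

lemma sym_pos_def_det_bounds:
  fixes L :: "real^'n^'n"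
  assumes "sym_pos_def L"
  shows "0 < det L" "det L \<le> lambda_max L ^ CARD('n)"
proof -
  have sym: "transpose L = L" using assms unfolding sym_pos_def_def by blast
  obtain c :: "'n \<Rightarrow> real" where det: "det L = (\<Prod>j\<in>UNIV. c j)" and eig: "\<And>j. c j \<in> real_eigenvalues L"
    by (rule det_symmetric_eq_prod_eigenvalues[OF sym]) blast
  have pos: "0 < c j" for j by (rule sym_pos_def_real_eigenvalue_pos[OF assms eig])
  then show "0 < det L" unfolding det by (simp add: prod_pos)
  have "(\<Prod>j\<in>UNIV. c j) \<le> (\<Prod>j\<in>(UNIV::'n set). lambda_max L)"
    by (rule prod_mono) (use pos real_eigenvalue_le_lambda_max[OF sym eig] in \<open>auto intro: less_imp_le\<close>)
  then show "det L \<le> lambda_max L ^ CARD('n)" unfolding det by simp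
qed

lemma sym_pos_def_det_root_le_lambda_max:
  fixes L :: "real^'n^'n"
  assumes "sym_pos_def L"
  shows "det L powr (1 / real CARD('n)) \<le> lambda_max L"
proof -
  have "det L powr (1 / real CARD('n)) \<le> (lambda_max L ^ CARD('n)) powr (1 / real CARD('n))"
    using sym_pos_def_det_bounds[OF assms] by (intro powr_mono2) auto
  also have "\<dots> = lambda_max L"
    using sym_pos_def_lambda_max_pos[OF assms] by (simp add: powr_realpow [symmetric] powr_powr)
  finally show ?thesis .
qed

lemma det_scaled_matrix_inv_root:
  fixes L :: "real^'n^'n"
  assumes "sym_pos_def L" "0 < k"
  shows "1 / det (k *\<^sub>R matrix_inv L) powr (1 / real CARD('n)) = det L powr (1 / real CARD('n)) / k"
proof -
  have "det (matrix_inv L) * det L = 1"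
    using sym_pos_def_matrix_inv(2)[OF assms(1)] by (metis det_I det_mul)
  then have "det (k *\<^sub>R matrix_inv L) = k ^ CARD('n) / det L"
    using sym_pos_def_det_bounds(1)[OF assms(1)] by (simp add: det_scaleR_matrix field_simps)
  moreover have "(k ^ CARD('n)) powr (1 / real CARD('n)) = k"
    using assms(2) by (simp add: powr_realpow [symmetric] powr_powr)
  ultimately show ?thesis
    using assms(2) sym_pos_def_det_bounds(1)[OF assms(1)] by (simp add: powr_divide)
qed

lemma half_one_plus_sqrt_le:
  fixes a t w :: real
  assumes "0 \<le> a" "0 \<le> t" "t \<le> w"
  shows "(1 + sqrt (1 + 4 * a * t)) / 2 \<le> 1 + sqrt (a * w)"
proof -
  have aw: "0 \<le> a * w" using assms by simp
  have "1 + 4 * a * t \<le> 1 + 4 * (a * w)" using mult_left_mono[OF assms(3,1)] by simp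
  also have "\<dots> \<le> (1 + 2 * sqrt (a * w))\<^sup>2"
    using real_sqrt_ge_zero[OF aw] real_sqrt_pow2[OF aw] by (simp add: power2_eq_square algebra_simps)
  finally have "sqrt (1 + 4 * a * t) \<le> 1 + 2 * sqrt (a * w)"
    using real_sqrt_le_mono real_sqrt_ge_zero[OF aw] by fastforce
  then show ?thesis by simp
qed

lemma inverse_det_root_scaled_matrix_inv_le:
  fixes L :: "real^'n^'n"
  assumes "sym_pos_def L" "0 \<le> a" "0 \<le> t" "t \<le> w"
  shows "1 / det ((2 / (1 + sqrt (1 + 4 * a * t))) *\<^sub>R matrix_inv L) powr (1 / real CARD('n))
    \<le> lambda_max L * (1 + sqrt (a * w))"
proof -
  define k where "k = 2 / (1 + sqrt (1 + 4 * a * t))"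
  have k: "0 < k" unfolding k_def using assms(2,3) by (simp add: add_pos_nonneg)
  have "1 / det (k *\<^sub>R matrix_inv L) powr (1 / real CARD('n)) = det L powr (1 / real CARD('n)) / k"
    by (rule det_scaled_matrix_inv_root[OF assms(1) k])
  also have "\<dots> \<le> lambda_max L / k"
    using sym_pos_def_det_root_le_lambda_max[OF assms(1)] k by (simp add: divide_right_mono)
  also have "\<dots> = lambda_max L * ((1 + sqrt (1 + 4 * a * t)) / 2)" by (simp add: k_def)
  also have "\<dots> \<le> lambda_max L * (1 + sqrt (a * w))"
    using half_one_plus_sqrt_le[OF assms(2-4)] sym_pos_def_lambda_max_pos[OF assms(1)]
    by (intro mult_left_mono) auto
  finally show ?thesis unfolding k_def .
qed

section \<open>Moments of a random symmetric matrix\<close>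

lemma bounded_linear_matrix_entry: "bounded_linear (\<lambda>Q::real^'n^'m. Q $ i $ j)"
  by (rule bounded_linear_compose[OF bounded_linear_vec_nth bounded_linear_vec_nth])

lemma bounded_linear_matrix_vector_mult_left: "bounded_linear (\<lambda>Q::real^'n^'m. Q *v y)"
proof -
  have "linear (\<lambda>Q::real^'n^'m. Q *v y)"
    by (rule linearI) (simp_all add: vec_eq_iff matrix_vector_mult_def sum_distrib_left
        mult.assoc distrib_right sum.distrib)
  then show ?thesis by (simp add: linear_conv_bounded_linear)
qed

lemma bounded_linear_transpose: "bounded_linear (transpose :: real^'n^'m \<Rightarrow> real^'m^'n)"
proof -
  have "linear (transpose :: real^'n^'m \<Rightarrow> real^'m^'n)"
    by (rule linearI) (simp_all add: transpose_def vec_eq_iff)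
  then show ?thesis by (simp add: linear_conv_bounded_linear)
qed

lemma integrable_matrix_entrywise:
  fixes f :: "'a \<Rightarrow> real^'n^'m"
  assumes "\<And>i j. integrable M (\<lambda>\<omega>. f \<omega> $ i $ j)"
  shows "integrable M f"
proof -
  have "integrable M (\<lambda>\<omega>. f \<omega> \<bullet> b)" if "b \<in> Basis" for b
  proof -
    from that obtain i j where "b = axis i (axis j (1::real))" unfolding Basis_vec_def by auto
    then show ?thesis using assms by (simp add: inner_axis)
  qed
  then have "integrable M (\<lambda>\<omega>. \<Sum>b\<in>Basis. (f \<omega> \<bullet> b) *\<^sub>R b)" by auto
  then show ?thesis by (simp add: euclidean_representation)
qed

lemma integrable_mult_of_square_integrable:
  fixes f g :: "'a \<Rightarrow> real"
  assumes "integrable M (\<lambda>x. (f x)\<^sup>2)" "integrable M (\<lambda>x. (g x)\<^sup>2)"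
    "f \<in> borel_measurable M" "g \<in> borel_measurable M"
  shows "integrable M (\<lambda>x. f x * g x)"
proof (rule Bochner_Integration.integrable_bound[of _ "\<lambda>x. (f x)\<^sup>2 + (g x)\<^sup>2"])
  have "\<bar>a * b\<bar> \<le> a\<^sup>2 + b\<^sup>2" for a b :: real
    using sum_squares_bound[of "\<bar>a\<bar>" "\<bar>b\<bar>"] abs_ge_zero[of "a * b"]
    unfolding abs_mult power2_abs by linarith
  then show "AE x in M. norm (f x * g x) \<le> norm ((f x)\<^sup>2 + (g x)\<^sup>2)" by simp
qed (use assms in simp_all)

lemma integrable_matrix_sandwich:
  fixes S :: "'a \<Rightarrow> real^'n^'n"
  assumes sq: "\<And>i j. integrable M (\<lambda>\<omega>. (S \<omega> $ i $ j)\<^sup>2)"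
    and meas: "\<And>i j. (\<lambda>\<omega>. S \<omega> $ i $ j) \<in> borel_measurable M"
  shows "integrable M (\<lambda>\<omega>. S \<omega> ** B ** S \<omega>)"
proof (rule integrable_matrix_entrywise)
  fix i j
  have "(\<lambda>\<omega>. (S \<omega> ** B ** S \<omega>) $ i $ j)
      = (\<lambda>\<omega>. \<Sum>k\<in>UNIV. \<Sum>l\<in>UNIV. B $ l $ k * (S \<omega> $ i $ l * S \<omega> $ k $ j))"
    by (simp add: matrix_matrix_mult_def sum_distrib_right sum_distrib_left mult_ac)
  moreover have "integrable M (\<lambda>\<omega>. S \<omega> $ i $ l * S \<omega> $ k $ j)" for l k
    by (rule integrable_mult_of_square_integrable[OF sq sq meas meas])
  ultimately show "integrable M (\<lambda>\<omega>. (S \<omega> ** B ** S \<omega>) $ i $ j)" by simp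
qed

lemma
  fixes F :: "'a \<Rightarrow> real^'n^'n"
  assumes "integrable M F"
  shows integrable_quadratic_form: "integrable M (\<lambda>\<omega>. x \<bullet> (F \<omega> *v y))"
    and integral_quadratic_form: "(\<integral>\<omega>. x \<bullet> (F \<omega> *v y) \<partial>M) = x \<bullet> (integral\<^sup>L M F *v y)"
proof -
  have bl: "bounded_linear (\<lambda>Q::real^'n^'n. x \<bullet> (Q *v y))"
    by (rule bounded_linear_compose[OF bounded_linear_inner_right bounded_linear_matrix_vector_mult_left])
  show "integrable M (\<lambda>\<omega>. x \<bullet> (F \<omega> *v y))" by (rule integrable_bounded_linear[OF bl assms])
  show "(\<integral>\<omega>. x \<bullet> (F \<omega> *v y) \<partial>M) = x \<bullet> (integral\<^sup>L M F *v y)"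
    by (rule integral_bounded_linear[OF bl assms])
qed

lemma transpose_integral_symmetric:
  fixes F :: "'a \<Rightarrow> real^'n^'n"
  assumes "integrable M F" "AE \<omega> in M. transpose (F \<omega>) = F \<omega>"
  shows "transpose (integral\<^sup>L M F) = integral\<^sup>L M F"
proof -
  have "transpose (integral\<^sup>L M F) = integral\<^sup>L M (\<lambda>\<omega>. transpose (F \<omega>))"
    using integral_bounded_linear[OF bounded_linear_transpose assms(1)] by simp
  also have "\<dots> = integral\<^sup>L M F"
    using assms integrable_bounded_linear[OF bounded_linear_transpose assms(1)]
    by (intro integral_cong_AE) (simp_all add: borel_measurable_integrable)
  finally show ?thesis .
qed

lemma shifted_quadratic_form_expand:
  fixes P B :: "real^'n^'n"
  assumes "transpose P = P" "transpose B = B"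
  shows "(P *v x - x) \<bullet> (B *v (P *v x - x))
    = x \<bullet> ((P ** B ** P) *v x) - 2 * ((B *v x) \<bullet> (P *v x)) + x \<bullet> (B *v x)"
proof -
  have "x \<bullet> ((P ** B ** P) *v x) = (P *v x) \<bullet> (B *v (P *v x))"
    using inner_matrix_vector_symmetric[OF assms(1), of x "B *v (P *v x)"]
    by (simp add: matrix_vector_mul_assoc matrix_mul_assoc inner_commute)
  moreover have "(P *v x) \<bullet> (B *v x) = x \<bullet> (B *v (P *v x))"
    by (rule inner_matrix_vector_symmetric[OF assms(2)])
  ultimately show ?thesis
    by (simp add: matrix_vector_mult_diff_distrib inner_diff_left inner_diff_right inner_commute)
qed

lemma expectation_shifted_quadratic_form:
  fixes S :: "'a \<Rightarrow> real^'n^'n" and B :: "real^'n^'n"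
  assumes P: "prob_space M" and iS: "integrable M S" and ES: "integral\<^sup>L M S = mat 1"
    and iSBS: "integrable M (\<lambda>\<omega>. S \<omega> ** B ** S \<omega>)"
    and symS: "AE \<omega> in M. transpose (S \<omega>) = S \<omega>" and symB: "transpose B = B"
  shows "integrable M (\<lambda>\<omega>. (S \<omega> *v x - x) \<bullet> (B *v (S \<omega> *v x - x)))"
    and "(\<integral>\<omega>. (S \<omega> *v x - x) \<bullet> (B *v (S \<omega> *v x - x)) \<partial>M)
      = x \<bullet> (integral\<^sup>L M (\<lambda>\<omega>. S \<omega> ** B ** S \<omega>) *v x) - x \<bullet> (B *v x)"
proof -
  define h where "h \<omega> = x \<bullet> ((S \<omega> ** B ** S \<omega>) *v x) - 2 * ((B *v x) \<bullet> (S \<omega> *v x)) + x \<bullet> (B *v x)"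
    for \<omega>
  have ae: "AE \<omega> in M. (S \<omega> *v x - x) \<bullet> (B *v (S \<omega> *v x - x)) = h \<omega>"
    using symS by eventually_elim (simp add: h_def shifted_quadratic_form_expand symB)
  have const: "integrable M (\<lambda>_. c)" for c :: real
    using P by (simp add: prob_space.finite_measure finite_measure.integrable_const)
  have ih: "integrable M h"
    unfolding h_def using integrable_quadratic_form[OF iSBS] integrable_quadratic_form[OF iS] const
    by (intro Bochner_Integration.integrable_add Bochner_Integration.integrable_diff
        Bochner_Integration.integrable_mult_right) blast+
  have "continuous_on UNIV (\<lambda>Q::real^'n^'n. (Q *v x - x) \<bullet> (B *v (Q *v x - x)))"
    by (intro continuous_intros bounded_linear.continuous_on[OF bounded_linear_matrix_vector_mult_left]
        bounded_linear.continuous_on[OF matrix_vector_mul_bounded_linear])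
  then have meas: "(\<lambda>\<omega>. (S \<omega> *v x - x) \<bullet> (B *v (S \<omega> *v x - x))) \<in> borel_measurable M"
    using measurable_compose[OF borel_measurable_integrable[OF iS] borel_measurable_continuous_onI]
    by (simp add: o_def)
  have ae': "AE \<omega> in M. h \<omega> = (S \<omega> *v x - x) \<bullet> (B *v (S \<omega> *v x - x))"
    using ae by (simp add: eq_commute)
  show "integrable M (\<lambda>\<omega>. (S \<omega> *v x - x) \<bullet> (B *v (S \<omega> *v x - x)))"
    by (rule integrable_cong_AE_imp[OF ih meas ae'])
  have "(\<integral>\<omega>. (S \<omega> *v x - x) \<bullet> (B *v (S \<omega> *v x - x)) \<partial>M) = integral\<^sup>L M h"
    by (rule integral_cong_AE[OF meas borel_measurable_integrable[OF ih] ae])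
  also have "\<dots> = x \<bullet> (integral\<^sup>L M (\<lambda>\<omega>. S \<omega> ** B ** S \<omega>) *v x) - 2 * ((B *v x) \<bullet> (integral\<^sup>L M S *v x))
      + x \<bullet> (B *v x)"
    unfolding h_def using integrable_quadratic_form[OF iSBS] integrable_quadratic_form[OF iS] const
    by (simp add: integral_quadratic_form[OF iSBS] integral_quadratic_form[OF iS] prob_space.prob_space[OF P])
  finally show "(\<integral>\<omega>. (S \<omega> *v x - x) \<bullet> (B *v (S \<omega> *v x - x)) \<partial>M)
      = x \<bullet> (integral\<^sup>L M (\<lambda>\<omega>. S \<omega> ** B ** S \<omega>) *v x) - x \<bullet> (B *v x)"
    by (simp add: ES inner_commute)
qed

lemma expected_sandwich_quadratic_form_bounds:
  fixes S :: "'a \<Rightarrow> real^'n^'n" and A :: "real^'n^'n"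
  assumes P: "prob_space M" and iS: "integrable M S" and ES: "integral\<^sup>L M S = mat 1"
    and iSS: "integrable M (\<lambda>\<omega>. S \<omega> ** S \<omega>)" and iSAS: "integrable M (\<lambda>\<omega>. S \<omega> ** A ** S \<omega>)"
    and symS: "AE \<omega> in M. transpose (S \<omega>) = S \<omega>"
    and A: "sym_psd A" and ray: "\<And>z. z \<bullet> (A *v z) \<le> \<mu> * (z \<bullet> z)"
  shows "0 \<le> x \<bullet> ((integral\<^sup>L M (\<lambda>\<omega>. S \<omega> ** A ** S \<omega>) - A) *v x)"
    and "x \<bullet> ((integral\<^sup>L M (\<lambda>\<omega>. S \<omega> ** A ** S \<omega>) - A) *v x)
      \<le> \<mu> * (x \<bullet> (integral\<^sup>L M (\<lambda>\<omega>. S \<omega> ** S \<omega>) *v x) - x \<bullet> x)"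
proof -
  have symA: "transpose A = A" and psd: "\<And>z. 0 \<le> z \<bullet> (A *v z)" using A unfolding sym_psd_def by auto
  have iSIS: "integrable M (\<lambda>\<omega>. S \<omega> ** mat 1 ** S \<omega>)" using iSS by simp
  note eA = expectation_shifted_quadratic_form[OF P iS ES iSAS symS symA, of x]
  note eI = expectation_shifted_quadratic_form[OF P iS ES iSIS symS transpose_mat, of x]
  have "0 \<le> (\<integral>\<omega>. (S \<omega> *v x - x) \<bullet> (A *v (S \<omega> *v x - x)) \<partial>M)"
    using psd by (intro integral_nonneg_AE) auto
  then show "0 \<le> x \<bullet> ((integral\<^sup>L M (\<lambda>\<omega>. S \<omega> ** A ** S \<omega>) - A) *v x)"
    by (simp add: eA(2) matrix_vector_mult_diff_rdistrib inner_diff_right)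
  have "(\<integral>\<omega>. (S \<omega> *v x - x) \<bullet> (A *v (S \<omega> *v x - x)) \<partial>M)
      \<le> (\<integral>\<omega>. \<mu> * ((S \<omega> *v x - x) \<bullet> (mat 1 *v (S \<omega> *v x - x))) \<partial>M)"
    using eA(1) eI(1) ray by (intro integral_mono) auto
  then show "x \<bullet> ((integral\<^sup>L M (\<lambda>\<omega>. S \<omega> ** A ** S \<omega>) - A) *v x)
      \<le> \<mu> * (x \<bullet> (integral\<^sup>L M (\<lambda>\<omega>. S \<omega> ** S \<omega>) *v x) - x \<bullet> x)"
    using eI(2) by (simp add: eA(2) matrix_vector_mult_diff_rdistrib inner_diff_right)
qed

lemma lambda_max_expected_sandwich_bounds:
  fixes S :: "'a \<Rightarrow> real^'n^'n" and A :: "real^'n^'n"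
  assumes P: "prob_space M" and iS: "integrable M S" and ES: "integral\<^sup>L M S = mat 1"
    and sq: "\<And>i j. integrable M (\<lambda>\<omega>. (S \<omega> $ i $ j)\<^sup>2)"
    and symS: "AE \<omega> in M. transpose (S \<omega>) = S \<omega>" and A: "sym_psd A"
  shows "0 \<le> lambda_max (integral\<^sup>L M (\<lambda>\<omega>. S \<omega> ** A ** S \<omega>) - A)"
    and "lambda_max (integral\<^sup>L M (\<lambda>\<omega>. S \<omega> ** A ** S \<omega>) - A)
      \<le> lambda_max A * (lambda_max (integral\<^sup>L M (\<lambda>\<omega>. S \<omega> ** S \<omega>)) - 1)"
proof -
  have symA: "transpose A = A" using A unfolding sym_psd_def by blast
  have meas: "(\<lambda>\<omega>. S \<omega> $ i $ j) \<in> borel_measurable M" for i j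
    using borel_measurable_integrable[OF integrable_bounded_linear[OF bounded_linear_matrix_entry iS]] .
  have iSBS: "integrable M (\<lambda>\<omega>. S \<omega> ** B ** S \<omega>)" for B
    by (rule integrable_matrix_sandwich[OF sq meas])
  have iSS: "integrable M (\<lambda>\<omega>. S \<omega> ** S \<omega>)" using iSBS[of "mat 1"] by simp
  have symE: "transpose (integral\<^sup>L M (\<lambda>\<omega>. S \<omega> ** B ** S \<omega>)) = integral\<^sup>L M (\<lambda>\<omega>. S \<omega> ** B ** S \<omega>)"
    if "transpose B = B" for B
    using symS that
    by (intro transpose_integral_symmetric[OF iSBS]) (auto elim!: eventually_mono simp: matrix_transpose_mul matrix_mul_assoc)
  have symK: "transpose (integral\<^sup>L M (\<lambda>\<omega>. S \<omega> ** A ** S \<omega>) - A)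
      = integral\<^sup>L M (\<lambda>\<omega>. S \<omega> ** A ** S \<omega>) - A"
    using symE[OF symA] symA by (simp add: transpose_def vec_eq_iff)
  have symN: "transpose (integral\<^sup>L M (\<lambda>\<omega>. S \<omega> ** S \<omega>)) = integral\<^sup>L M (\<lambda>\<omega>. S \<omega> ** S \<omega>)"
    using symE[of "mat 1"] by simp
  have "0 \<le> lambda_max A"
    using A unfolding sym_psd_def by (blast intro: lambda_max_nonneg_of_quadratic_form_nonneg)
  note bounds = expected_sandwich_quadratic_form_bounds[OF P iS ES iSS iSBS symS A
      quadratic_form_le_lambda_max[OF symA]]
  show "0 \<le> lambda_max (integral\<^sup>L M (\<lambda>\<omega>. S \<omega> ** A ** S \<omega>) - A)"
    by (rule lambda_max_nonneg_of_quadratic_form_nonneg[OF symK bounds(1)])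
  show "lambda_max (integral\<^sup>L M (\<lambda>\<omega>. S \<omega> ** A ** S \<omega>) - A)
      \<le> lambda_max A * (lambda_max (integral\<^sup>L M (\<lambda>\<omega>. S \<omega> ** S \<omega>)) - 1)"
    by (rule lambda_max_le_of_quadratic_form_le[OF symK symN \<open>0 \<le> lambda_max A\<close> bounds(2)])
qed

theorem corollary3:
  fixes M :: "'a measure"
    and S :: "'a \<Rightarrow> real^'d^'d"
    and L :: "real^'d^'d"
    and Ls :: "nat \<Rightarrow> real^'d^'d"
    and n :: nat and p :: real
  assumes "prob_space M"
    and "S \<in> borel_measurable M"
    and "AE \<omega> in M. sym_psd (S \<omega>)"
    and "integrable M S"
    and "integral\<^sup>L M S = mat 1"
    and "\<And>i j. integrable M (\<lambda>\<omega>. (S \<omega> $ i $ j)\<^sup>2)"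
    and "n \<ge> 1"
    and "sym_pos_def L"
    and "\<And>i. i < n \<Longrightarrow> sym_pos_def (Ls i)"
    and "(1 / real n) * (\<Sum>i<n. lambda_max (matrix_inv L) * lambda_max (Ls i)
            * lambda_max (Ls i ** matrix_inv L)) = 1"
    and "0 < p" and "p \<le> 1"
  shows "let \<alpha> = (1 - p) / (real n * p);
             \<beta> = (1 / real n) * (\<Sum>i<n. lambda_max (Ls i) * lambda_max (matrix_inv L ** Ls i));
             om = lambda_max (integral\<^sup>L M (\<lambda>\<omega>. S \<omega> ** S \<omega>)) - 1;
             lam = lambda_max (integral\<^sup>L M (\<lambda>\<omega>. S \<omega> ** matrix_inv L ** S \<omega>) - matrix_inv L);
             D = (2 / (1 + sqrt (1 + 4 * \<alpha> * \<beta> * lam))) *\<^sub>R matrix_inv L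
         in \<beta> * lam \<le> om \<and>
            1 / (det D powr (1 / real CARD('d)))
              \<le> lambda_max L * (1 + sqrt ((1 - p) * om / (p * real n)))"
proof -
  define A where "A = matrix_inv L"
  have pdA: "sym_pos_def A" unfolding A_def by (rule sym_pos_def_matrix_inv(3)[OF assms(8)])
  define \<beta> where "\<beta> = (1 / real n) * (\<Sum>i<n. lambda_max (Ls i) * lambda_max (A ** Ls i))"
  have \<beta>: "\<beta> = 1 / lambda_max A"
    unfolding \<beta>_def A_def by (rule mean_lambda_max_products_eq_inverse[OF assms(8,9,10)])
  have A_pos: "0 < lambda_max A" by (rule sym_pos_def_lambda_max_pos[OF pdA])
  define lam where "lam = lambda_max (integral\<^sup>L M (\<lambda>\<omega>. S \<omega> ** A ** S \<omega>) - A)"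
  define om where "om = lambda_max (integral\<^sup>L M (\<lambda>\<omega>. S \<omega> ** S \<omega>)) - 1"
  have "AE \<omega> in M. transpose (S \<omega>) = S \<omega>" using assms(3) by eventually_elim (simp add: sym_psd_def)
  note lam = lambda_max_expected_sandwich_bounds[OF assms(1,4,5,6) this sym_pos_def_imp_sym_psd[OF pdA],
      folded lam_def om_def]
  have \<beta>lam: "\<beta> * lam \<le> om" using lam(2) A_pos by (simp add: \<beta> divide_le_eq mult.commute)
  define \<alpha> where "\<alpha> = (1 - p) / (real n * p)"
  have \<alpha>: "0 \<le> \<alpha>" unfolding \<alpha>_def using assms(7,11,12) by simp
  have "1 / det ((2 / (1 + sqrt (1 + 4 * \<alpha> * (\<beta> * lam)))) *\<^sub>R A) powr (1 / real CARD('d))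
      \<le> lambda_max L * (1 + sqrt (\<alpha> * om))"
    unfolding A_def using \<beta> A_pos lam(1)
    by (intro inverse_det_root_scaled_matrix_inv_le[OF assms(8) \<alpha> _ \<beta>lam]) simp
  moreover have "\<alpha> * om = (1 - p) * om / (p * real n)" by (simp add: \<alpha>_def field_simps)
  ultimately show ?thesis
    using \<beta>lam unfolding Let_def A_def[symmetric] \<alpha>_def[symmetric] \<beta>_def[symmetric] lam_def[symmetric]
      om_def[symmetric] by (simp add: mult.assoc)
qed

end
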